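(* Let $(U,d)$ be a complete separable ultrametric space. There exists a nested interval-partition $(I_t)_{t\ge0}$ such that $(U_I,d_I)$ is isometric to $(U,d)$.
   Context: A nested interval-partition is a càdlàg (Hausdorff distance between complements) map $t\mapsto I_t$, $t\ge0$, into open subsets of $(0,1)$ with $I_s\subseteq I_t$ for $s\le t$. $f_I(x)=\inf\{t\ge0:x\in I_t\}$ for $x\in[0,1]$, $d_I(x,y)=\mathbf 1_{\{x\ne y\}}\sup_{[x\wedge y,x\vee y]}f_I$. $U_I$ is the completion of the quotient of $(\{f_I=0\},d_I)$ by the relation $x\sim y$ iff $d_I(x,y)=0$. *)

theory Defs
  imports "HOL-Analysis.Analysis"
begin

definition hausdist :: "real set \<Rightarrow> real set \<Rightarrow> real" where
  "hausdist A B = max (SUP a\<in>A. infdist a B) (SUP b\<in>B. infdist b A)"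

definition compl01 :: "(real \<Rightarrow> real set) \<Rightarrow> real \<Rightarrow> real set" where
  "compl01 I t = {0..1} - I t"

text \<open>Nested interval-partition: for t \<ge> 0, I t is an open subset of (0,1),
  increasing in t, and t \<mapsto> [0,1] - I t is cadlag for the Hausdorff distance
  (right-continuous at every t \<ge> 0, left limits (nonempty compact sets) at every t > 0).\<close>
definition nested_interval_partition :: "(real \<Rightarrow> real set) \<Rightarrow> bool" where
  "nested_interval_partition I \<longleftrightarrow>
     (\<forall>t\<ge>0. open (I t) \<and> I t \<subseteq> {0<..<1}) \<and>
     (\<forall>s t. 0 \<le> s \<and> s \<le> t \<longrightarrow> I s \<subseteq> I t) \<and>
     (\<forall>t\<ge>0. ((\<lambda>s. hausdist (compl01 I s) (compl01 I t)) \<longlongrightarrow> 0) (at_right t)) \<and>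
     (\<forall>t>0. \<exists>K. compact K \<and> K \<noteq> {} \<and>
                ((\<lambda>s. hausdist (compl01 I s) K) \<longlongrightarrow> 0) (at_left t))"

text \<open>f_I(x) = inf {t \<ge> 0. x \<in> I t}, with inf of the empty set = \<infinity>.\<close>
definition fI :: "(real \<Rightarrow> real set) \<Rightarrow> real \<Rightarrow> ereal" where
  "fI I x = Inf ((\<lambda>t. ereal t) ` {t. 0 \<le> t \<and> x \<in> I t})"

definition dI :: "(real \<Rightarrow> real set) \<Rightarrow> real \<Rightarrow> real \<Rightarrow> ereal" where
  "dI I x y = (if x = y then 0 else Sup (fI I ` {min x y..max x y}))"

definition zeroset :: "(real \<Rightarrow> real set) \<Rightarrow> real set" where
  "zeroset I = {x \<in> {0..1}. fI I x = 0}"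

text \<open>(Y,dY) is (isometric to) the completion of the quotient of the pseudometric
  space (X,dX) by the relation dX x y = 0: (Y,dY) is a complete metric space and
  there is a distance-preserving map from X into Y with dense image.
  (Any distance-preserving map factors through the quotient, and the completion
  is unique up to isometry.)\<close>
definition is_completion_of_quotient ::
    "'a set \<Rightarrow> ('a \<Rightarrow> 'a \<Rightarrow> real) \<Rightarrow> 'b set \<Rightarrow> ('b \<Rightarrow> 'b \<Rightarrow> ereal) \<Rightarrow> bool" where
  "is_completion_of_quotient Y dY X dX \<longleftrightarrow>
     Metric_space Y dY \<and> Metric_space.mcomplete Y dY \<and>
     (\<exists>\<phi>. \<phi> ` X \<subseteq> Y \<and>
          (\<forall>x\<in>X. \<forall>y\<in>X. ereal (dY (\<phi> x) (\<phi> y)) = dX x y) \<and>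
          Metric_space.mtopology Y dY closure_of (\<phi> ` X) = Y)"

end

theory Submission
  imports Defs
begin

text \<open>
  Enumerate a dense sequence \<open>q\<close> of \<open>U\<close>. Two distinct points \<open>x, y\<close> lie in disjoint balls of
  radius \<open>d x y\<close>; comparing these balls by the least index of a point of \<open>q\<close> they contain gives a
  total order on \<open>U\<close> along which the ultrametric is convex: \<open>d x z = max (d x y) (d y z)\<close> for
  \<open>x < y < z\<close>. Lay out disjoint open intervals of length \<open>2^-(n+1)\<close>, labelled \<open>q n\<close>, in this
  order inside \<open>(0,1)\<close>; they have full measure, hence are dense. Let \<open>I t\<close> be \<open>(0,1)\<close> minus the
  closure of the points where the labels oscillate by more than \<open>t\<close>. Then \<open>f_I\<close> vanishes exactly
  where the labels are Cauchy, completeness extends the labelling to \<open>{f_I = 0}\<close>, and by convexity the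
  largest oscillation between two such points is the distance of their labels, i.e. \<open>d_I\<close>.
  The image contains \<open>q\<close>, so it is dense.
\<close>

section \<open>Hausdorff limits of monotone compact families\<close>

lemma hausdist_commute: "hausdist A B = hausdist B A"
  unfolding hausdist_def by simp

lemma hausdist_le_of_subset:
  assumes "A \<subseteq> B" "A \<noteq> {}" "\<And>b. b \<in> B \<Longrightarrow> infdist b A \<le> e" "0 \<le> e"
  shows "\<bar>hausdist A B\<bar> \<le> e"
proof -
  have "(SUP a\<in>A. infdist a B) = (SUP a\<in>A. 0)"
    using assms(1) by (intro SUP_cong) (auto simp: infdist_zero)
  then have "(SUP a\<in>A. infdist a B) = 0"
    using assms(2) by simp
  moreover have "(SUP b\<in>B. infdist b A) \<le> e"
    using assms by (intro cSUP_least) auto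
  ultimately show ?thesis
    unfolding hausdist_def using assms(4) by auto
qed

lemma compact_subset_closure_finite_cover:
  fixes K S :: "'a::metric_space set"
  assumes "compact K" "K \<subseteq> closure S" "0 < e"
  obtains F where "F \<subseteq> S" "finite F" "K \<subseteq> (\<Union>p\<in>F. ball p e)"
proof -
  have "K \<subseteq> (\<Union>p\<in>S. ball p e)"
  proof
    fix b assume "b \<in> K"
    then have "b \<in> closure S" using assms(2) by blast
    then obtain p where "p \<in> S" "dist b p < e"
      using closure_approachableD assms(3) by blast
    then show "b \<in> (\<Union>p\<in>S. ball p e)" by (auto simp: dist_commute)
  qed
  then obtain F where "F \<subseteq> S" "finite F" "K \<subseteq> (\<Union>p\<in>F. ball p e)"
    by (rule compactE_image[OF assms(1) open_ball])
  then show ?thesis by (rule that)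
qed

lemma hausdist_tendsto_at_right:
  fixes C :: "real \<Rightarrow> real set"
  assumes anti: "antimono C" and nonempty: "\<And>s. C s \<noteq> {}" and "compact (C t)"
    and approx: "C t \<subseteq> closure (\<Union>s\<in>{t<..}. C s)"
  shows "((\<lambda>s. hausdist (C s) (C t)) \<longlongrightarrow> 0) (at_right t)"
proof (rule tendstoI)
  fix e :: real assume "e > 0"
  obtain F where F: "F \<subseteq> (\<Union>s\<in>{t<..}. C s)" "finite F" "C t \<subseteq> (\<Union>p\<in>F. ball p (e/2))"
    using compact_subset_closure_finite_cover[OF \<open>compact (C t)\<close> approx, of "e/2"] \<open>e > 0\<close> by auto
  have "\<forall>p\<in>F. \<forall>\<^sub>F s in at_right t. p \<in> C s"
  proof
    fix p assume "p \<in> F"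
    then obtain s0 where "t < s0" "p \<in> C s0" using F(1) by auto
    moreover have "p \<in> C s" if "s < s0" for s
      using antimonoD[OF anti, of s s0] \<open>p \<in> C s0\<close> that by auto
    ultimately show "\<forall>\<^sub>F s in at_right t. p \<in> C s"
      unfolding eventually_at_right_field by blast
  qed
  then have "\<forall>\<^sub>F s in at_right t. \<forall>p\<in>F. p \<in> C s"
    by (rule eventually_ball_finite[OF F(2)])
  then have "\<forall>\<^sub>F s in at_right t. (\<forall>p\<in>F. p \<in> C s) \<and> t < s"
    using eventually_at_right_less by (rule eventually_conj)
  then show "\<forall>\<^sub>F s in at_right t. dist (hausdist (C s) (C t)) 0 < e"
  proof (rule eventually_mono)
    fix s assume s: "(\<forall>p\<in>F. p \<in> C s) \<and> t < s"
    have "infdist b (C s) \<le> e/2" if "b \<in> C t" for b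
    proof -
      obtain p where "p \<in> F" "b \<in> ball p (e/2)" using F(3) \<open>b \<in> C t\<close> by blast
      then have "p \<in> C s" "dist b p < e/2" using s by (auto simp: dist_commute)
      then show ?thesis using infdist_le[of p "C s" b] by linarith
    qed
    moreover have "C s \<subseteq> C t" using antimonoD[OF anti, of t s] s by simp
    ultimately have "\<bar>hausdist (C s) (C t)\<bar> \<le> e/2"
      using nonempty \<open>e > 0\<close> by (intro hausdist_le_of_subset) auto
    then show "dist (hausdist (C s) (C t)) 0 < e"
      using \<open>e > 0\<close> by simp
  qed
qed

lemma antimono_compact_eventually_near_Inter:
  fixes C :: "real \<Rightarrow> 'a::heine_borel set"
  assumes anti: "antimono C" and compact: "\<And>s. compact (C s)" and "e > 0"
  shows "\<exists>m<t. \<forall>a\<in>C m. infdist a (\<Inter>s\<in>{..<t}. C s) < e"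
proof -
  define K where "K = (\<Inter>s\<in>{..<t}. C s)"
  define G where "G s = C s \<inter> {a. e \<le> infdist a K}" for s
  have "compact (G s)" for s
    unfolding G_def using compact
    by (intro compact_Int_closed closed_Collect_le continuous_on_infdist continuous_on_id continuous_on_const) auto
  moreover have "\<Inter>(G ` {..<t}) = {}"
  proof (rule ccontr)
    assume "\<Inter>(G ` {..<t}) \<noteq> {}"
    then obtain a where a: "\<And>s. s < t \<Longrightarrow> a \<in> G s" by auto
    then have "a \<in> K" unfolding K_def G_def by auto
    moreover have "e \<le> infdist a K" using a[of "t - 1"] unfolding G_def by auto
    ultimately show False using \<open>e > 0\<close> by simp
  qed
  ultimately obtain F where "finite F" "F \<subseteq> G ` {..<t}" "\<Inter>F = {}"
    using compact_fip_Heine_Borel[of "G ` {..<t}"] by blast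
  then obtain S where S: "S \<subseteq> {..<t}" "finite S" "\<Inter>(G ` S) = {}"
    using finite_subset_image[of F G "{..<t}"] by blast
  have "S \<noteq> {}" using S(3) by auto
  define m where "m = Max S"
  have "m \<in> S" "\<And>s. s \<in> S \<Longrightarrow> s \<le> m" using S(2) \<open>S \<noteq> {}\<close> by (auto simp: m_def)
  then have "G m = {}"
    using S(3) antimonoD[OF anti] unfolding G_def by blast
  then show ?thesis
    using \<open>m \<in> S\<close> S(1) unfolding G_def K_def by force
qed

lemma hausdist_tendsto_at_left:
  fixes C :: "real \<Rightarrow> real set"
  assumes anti: "antimono C" and "\<And>s. compact (C s)" and common: "\<And>s. c \<in> C s"
  shows "((\<lambda>s. hausdist (C s) (\<Inter>s\<in>{..<t}. C s)) \<longlongrightarrow> 0) (at_left t)"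
proof (rule tendstoI)
  fix e :: real assume "e > 0"
  define K where "K = (\<Inter>s\<in>{..<t}. C s)"
  obtain m where "m < t" and m: "\<And>a. a \<in> C m \<Longrightarrow> infdist a K < e/2"
    using antimono_compact_eventually_near_Inter[OF assms(1,2), of "e/2" t] \<open>e > 0\<close>
    unfolding K_def by auto
  have "\<forall>\<^sub>F s in at_left t. m < s \<and> s < t"
    using \<open>m < t\<close> unfolding eventually_at_left_field by blast
  then show "\<forall>\<^sub>F s in at_left t. dist (hausdist (C s) K) 0 < e"
  proof (rule eventually_mono)
    fix s assume s: "m < s \<and> s < t"
    have "\<bar>hausdist K (C s)\<bar> \<le> e/2"
    proof (rule hausdist_le_of_subset)
      show "K \<subseteq> C s" "K \<noteq> {}" using s common unfolding K_def by auto
      show "infdist b K \<le> e/2" if "b \<in> C s" for b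
        using m[of b] that antimonoD[OF anti, of m s] s by auto
    qed (use \<open>e > 0\<close> in auto)
    then show "dist (hausdist (C s) K) 0 < e"
      using \<open>e > 0\<close> by (simp add: hausdist_commute)
  qed
qed

section \<open>Nested interval-partitions\<close>

lemma antimono_compl01: "mono I \<Longrightarrow> antimono (compl01 I)"
  unfolding compl01_def by (intro antimonoI) (auto dest: monoD)

lemma compact_compl01: "open (I t) \<Longrightarrow> compact (compl01 I t)"
  unfolding compl01_def by (intro compact_diff) simp_all

text \<open>Right-continuity comes from compactness of the complements; the left limit at \<open>t\<close> is the
  intersection of the earlier complements.\<close>

lemma nested_interval_partitionI:
  assumes "\<And>t. open (I t)" "\<And>t. I t \<subseteq> {0<..<1}" "mono I"
    and approx: "\<And>t. compl01 I t \<subseteq> closure (\<Union>s\<in>{t<..}. compl01 I s)"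
  shows "nested_interval_partition I"
  unfolding nested_interval_partition_def
proof (intro conjI allI impI)
  have anti: "antimono (compl01 I)" using assms(3) by (rule antimono_compl01)
  have compact: "compact (compl01 I t)" for t using assms(1) by (rule compact_compl01)
  have zero: "0 \<in> compl01 I t" for t using assms(2)[of t] by (auto simp: compl01_def)
  fix t :: real
  show "open (I t)" "I t \<subseteq> {0<..<1}" by (fact assms(1), fact assms(2))
  show "((\<lambda>s. hausdist (compl01 I s) (compl01 I t)) \<longlongrightarrow> 0) (at_right t)"
    using zero by (intro hausdist_tendsto_at_right[OF anti _ compact approx]) blast
  have "compact (\<Inter>s\<in>{..<t}. compl01 I s)"
    using compact by (intro compact_Inter) auto
  moreover have "0 \<in> (\<Inter>s\<in>{..<t}. compl01 I s)" using zero by blast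
  moreover have "((\<lambda>s. hausdist (compl01 I s) (\<Inter>s\<in>{..<t}. compl01 I s)) \<longlongrightarrow> 0) (at_left t)"
    using anti compact zero by (rule hausdist_tendsto_at_left)
  ultimately show "\<exists>K. compact K \<and> K \<noteq> {} \<and> ((\<lambda>s. hausdist (compl01 I s) K) \<longlongrightarrow> 0) (at_left t)"
    by blast
next
  fix s t :: real assume "0 \<le> s \<and> s \<le> t"
  then show "I s \<subseteq> I t" using monoD[OF assms(3)] by blast
qed

definition jump_set :: "(real \<Rightarrow> real \<Rightarrow> bool) \<Rightarrow> real \<Rightarrow> real set" where
  "jump_set Q t = {z. 0 < z \<and> z < 1 \<and> (\<exists>s>t. Q z s)}"

definition jump_partition :: "(real \<Rightarrow> real \<Rightarrow> bool) \<Rightarrow> real \<Rightarrow> real set" where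
  "jump_partition Q t = {0<..<1} - closure (jump_set Q t)"

lemma closure_jump_set_subset: "closure (jump_set Q t) \<subseteq> {0..1}"
  by (rule closure_minimal) (auto simp: jump_set_def)

lemma antimono_jump_set: "antimono (jump_set Q)"
proof (rule antimonoI)
  fix s t :: real assume "s \<le> t"
  then show "jump_set Q t \<le> jump_set Q s"
    unfolding jump_set_def using le_less_trans by blast
qed

lemma jump_set_eq_Union: "jump_set Q t = (\<Union>s\<in>{t<..}. jump_set Q s)"
proof
  show "jump_set Q t \<subseteq> (\<Union>s\<in>{t<..}. jump_set Q s)"
  proof
    fix z assume "z \<in> jump_set Q t"
    then obtain s where "t < s" "Q z s" "0 < z" "z < 1" by (auto simp: jump_set_def)
    moreover have "(t + s) / 2 < s" "t < (t + s) / 2" using \<open>t < s\<close> by auto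
    ultimately have "z \<in> jump_set Q ((t + s) / 2)" unfolding jump_set_def by blast
    then show "z \<in> (\<Union>s\<in>{t<..}. jump_set Q s)" using \<open>t < (t + s) / 2\<close> by blast
  qed
  show "(\<Union>s\<in>{t<..}. jump_set Q s) \<subseteq> jump_set Q t"
  proof (rule UN_least)
    fix s assume "s \<in> {t<..}"
    then show "jump_set Q s \<subseteq> jump_set Q t"
      using antimonoD[OF antimono_jump_set, of t s] by simp
  qed
qed

lemma compl01_jump_partition: "compl01 (jump_partition Q) t = {0, 1} \<union> closure (jump_set Q t)"
  using closure_jump_set_subset[of Q t] by (auto simp: compl01_def jump_partition_def)

lemma mono_jump_partition: "mono (jump_partition Q)"
proof (rule monoI)
  fix s t :: real assume "s \<le> t"
  then have "closure (jump_set Q t) \<subseteq> closure (jump_set Q s)"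
    using antimonoD[OF antimono_jump_set] closure_mono by metis
  then show "jump_partition Q s \<le> jump_partition Q t"
    unfolding jump_partition_def by auto
qed

lemma compl01_jump_partition_subset_closure:
  "compl01 (jump_partition Q) t \<subseteq> closure (\<Union>s\<in>{t<..}. compl01 (jump_partition Q) s)"
proof -
  have "{0, 1} \<union> jump_set Q t \<subseteq> (\<Union>s\<in>{t<..}. compl01 (jump_partition Q) s)"
    using jump_set_eq_Union[of Q t] closure_subset[of "jump_set Q _"] gt_ex[of t]
    unfolding compl01_jump_partition by blast
  then have "closure ({0, 1} \<union> jump_set Q t) \<subseteq> closure (\<Union>s\<in>{t<..}. compl01 (jump_partition Q) s)"
    by (rule closure_mono)
  moreover have "compl01 (jump_partition Q) t \<subseteq> closure ({0, 1} \<union> jump_set Q t)"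
    unfolding compl01_jump_partition closure_Un using closure_subset[of "{0, 1}"] by blast
  ultimately show ?thesis by (rule order_trans[rotated])
qed

lemma nested_interval_partition_jump_partition: "nested_interval_partition (jump_partition Q)"
  using mono_jump_partition compl01_jump_partition_subset_closure
  by (intro nested_interval_partitionI) (auto simp: jump_partition_def)

lemma fI_ge:
  assumes "\<And>t. 0 \<le> t \<Longrightarrow> t < r \<Longrightarrow> z \<notin> I t"
  shows "ereal r \<le> fI I z"
  unfolding fI_def using assms by (intro Inf_greatest) force

lemma fI_nonneg: "0 \<le> fI I z"
  using fI_ge[of 0 z I] by (simp add: zero_ereal_def)

lemma fI_le:
  assumes "0 \<le> r" "\<And>t. r < t \<Longrightarrow> z \<in> I t"
  shows "fI I z \<le> ereal r"
proof (rule ereal_le_epsilon2)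
  fix e :: real assume "0 < e"
  then have "fI I z \<le> ereal (r + e)"
    unfolding fI_def using assms by (intro Inf_lower) auto
  then show "fI I z \<le> ereal r + ereal e" by simp
qed

lemma mem_of_fI_eq_0:
  assumes "mono I" "fI I z = 0" "0 < t"
  shows "z \<in> I t"
proof -
  have "Inf ((\<lambda>t. ereal t) ` {t. 0 \<le> t \<and> z \<in> I t}) < ereal t"
    using assms(2,3) unfolding fI_def by (simp add: zero_ereal_def)
  then obtain s where "0 \<le> s" "z \<in> I s" "s < t"
    by (auto simp: Inf_less_iff)
  then show ?thesis using monoD[OF assms(1), of s t] by auto
qed

lemma zeroset_jump_partition_subset: "zeroset (jump_partition Q) \<subseteq> {0<..<1}"
proof
  fix z assume z: "z \<in> zeroset (jump_partition Q)"
  show "z \<in> {0<..<1}"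
  proof (rule ccontr)
    assume "z \<notin> {0<..<1}"
    then have "{t. 0 \<le> t \<and> z \<in> jump_partition Q t} = {}"
      unfolding jump_partition_def by auto
    then have "fI (jump_partition Q) z = \<infinity>"
      unfolding fI_def by (metis Inf_empty image_empty top_ereal_def)
    then show False using z unfolding zeroset_def by simp
  qed
qed

lemma zeroset_jump_partition_True: "zeroset (jump_partition (\<lambda>_ _. True)) = {}"
proof -
  have "jump_set (\<lambda>_ _. True) t = {0<..<1}" for t
    unfolding jump_set_def by (auto intro: gt_ex)
  then have "jump_partition (\<lambda>_ _. True) t = {}" for t
    unfolding jump_partition_def using closure_subset by blast
  then have "fI (jump_partition (\<lambda>_ _. True)) z = \<infinity>" for z
    unfolding fI_def by (simp add: top_ereal_def)
  then show ?thesis unfolding zeroset_def by simp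
qed

lemma is_completion_of_quotient_empty:
  assumes "Metric_space {} d" "Metric_space.mcomplete {} d"
  shows "is_completion_of_quotient {} d {} dX"
  using assms unfolding is_completion_of_quotient_def by auto

section \<open>Complete and separable metric spaces\<close>

lemma (in Metric_space) MCauchy_comp_of_oscillation:
  fixes f :: "'b::metric_space \<Rightarrow> 'a"
  assumes "f ` S \<subseteq> M" "\<And>n. s n \<in> S" "s \<longlonglongrightarrow> z"
    and cauchy: "\<And>e. 0 < e \<Longrightarrow> \<exists>\<delta>>0. \<forall>u\<in>S. \<forall>v\<in>S. dist u z < \<delta> \<longrightarrow> dist v z < \<delta> \<longrightarrow> d (f u) (f v) \<le> e"
  shows "MCauchy (f \<circ> s)"
  unfolding MCauchy_def
proof (intro conjI allI impI)
  show "range (f \<circ> s) \<subseteq> M" using assms(1,2) by auto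
  fix e :: real assume "0 < e"
  then obtain \<delta> where "0 < \<delta>" and \<delta>: "\<forall>u\<in>S. \<forall>v\<in>S. dist u z < \<delta> \<longrightarrow> dist v z < \<delta> \<longrightarrow> d (f u) (f v) \<le> e/2"
    using cauchy[of "e/2"] by auto
  obtain N where "\<forall>n\<ge>N. dist (s n) z < \<delta>" using metric_LIMSEQ_D[OF assms(3) \<open>0 < \<delta>\<close>] by blast
  then have "\<forall>n n'. N \<le> n \<longrightarrow> N \<le> n' \<longrightarrow> d ((f \<circ> s) n) ((f \<circ> s) n') < e"
    using \<delta> assms(2) \<open>0 < e\<close> by fastforce
  then show "\<exists>N. \<forall>n n'. N \<le> n \<longrightarrow> N \<le> n' \<longrightarrow> d ((f \<circ> s) n) ((f \<circ> s) n') < e" ..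
qed

lemma (in Metric_space) mcomplete_imp_limit_at:
  fixes f :: "'b::metric_space \<Rightarrow> 'a"
  assumes "mcomplete" "f ` S \<subseteq> M" "z \<in> closure S"
    and cauchy: "\<And>e. 0 < e \<Longrightarrow> \<exists>\<delta>>0. \<forall>u\<in>S. \<forall>v\<in>S. dist u z < \<delta> \<longrightarrow> dist v z < \<delta> \<longrightarrow> d (f u) (f v) \<le> e"
  shows "\<exists>y\<in>M. \<forall>e>0. \<exists>\<delta>>0. \<forall>u\<in>S. dist u z < \<delta> \<longrightarrow> d (f u) y < e"
proof -
  obtain s where s: "\<And>n. s n \<in> S" "s \<longlonglongrightarrow> z"
    using assms(3) unfolding closure_sequential by blast
  then obtain y where "limitin mtopology (f \<circ> s) y sequentially"
    using assms(1) MCauchy_comp_of_oscillation[OF assms(2) _ _ cauchy] unfolding mcomplete_def by blast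
  then have "y \<in> M" and y: "\<And>e. 0 < e \<Longrightarrow> \<exists>N. \<forall>n\<ge>N. d (f (s n)) y < e"
    unfolding limit_metric_sequentially comp_apply by (blast, meson)
  have "\<exists>\<delta>>0. \<forall>u\<in>S. dist u z < \<delta> \<longrightarrow> d (f u) y < e" if "0 < e" for e
  proof -
    obtain \<delta> where "0 < \<delta>" and \<delta>: "\<forall>u\<in>S. \<forall>v\<in>S. dist u z < \<delta> \<longrightarrow> dist v z < \<delta> \<longrightarrow> d (f u) (f v) \<le> e/2"
      using cauchy[of "e/2"] \<open>0 < e\<close> by auto
    obtain N1 where N1: "\<forall>n\<ge>N1. dist (s n) z < \<delta>" using metric_LIMSEQ_D[OF s(2) \<open>0 < \<delta>\<close>] by blast
    obtain N2 where N2: "\<forall>n\<ge>N2. d (f (s n)) y < e/2" using y[of "e/2"] \<open>0 < e\<close> by auto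
    define n where "n = max N1 N2"
    have "d (f u) y < e" if "u \<in> S" "dist u z < \<delta>" for u
    proof -
      have "d (f u) y \<le> d (f u) (f (s n)) + d (f (s n)) y"
        using triangle assms(2) s(1) \<open>y \<in> M\<close> that(1) by blast
      moreover have "d (f u) (f (s n)) \<le> e/2" using \<delta> that s(1) N1 unfolding n_def by simp
      moreover have "d (f (s n)) y < e/2" using N2 unfolding n_def by simp
      ultimately show ?thesis by simp
    qed
    then show ?thesis using \<open>0 < \<delta>\<close> by blast
  qed
  then show ?thesis using \<open>y \<in> M\<close> by blast
qed

lemma (in Metric_space) separable_imp_dense_sequence:
  assumes "separable_space mtopology" "M \<noteq> {}"
  shows "\<exists>q :: nat \<Rightarrow> 'a. (\<forall>n. q n \<in> M) \<and> (\<forall>x\<in>M. \<forall>r>0. \<exists>n. d (q n) x < r)"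
proof -
  obtain C where C: "countable C" "C \<subseteq> M" "mtopology closure_of C = M"
    using assms(1) unfolding separable_space_def by auto
  then have "C \<noteq> {}" using assms(2) by auto
  define q where "q = from_nat_into C"
  have "range q = C" unfolding q_def using range_from_nat_into[OF \<open>C \<noteq> {}\<close> C(1)] .
  then have "q n \<in> M" for n using C(2) by auto
  moreover have "\<exists>n. d (q n) x < r" if x: "x \<in> M" and r: "0 < r" for x r
  proof -
    have "x \<in> mtopology closure_of C" using C(3) x by simp
    then obtain y where "y \<in> C" "y \<in> mball x r" using r unfolding metric_closure_of by blast
    moreover obtain n where "y = q n" using \<open>y \<in> C\<close> \<open>range q = C\<close> by auto
    ultimately have "d (q n) x < r" using commute by auto
    then show ?thesis ..
  qed
  ultimately show ?thesis by blast
qed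

section \<open>Laying out an ultrametric space along the unit interval\<close>

definition weight :: "nat set \<Rightarrow> real" where
  "weight S = (\<Sum>n. if n \<in> S then (1/2) ^ Suc n else 0)"

lemma summable_weight: "summable (\<lambda>n. if n \<in> S then (1/2::real) ^ Suc n else 0)"
  by (rule summable_comparison_test[OF _ summable_geometric[of "1/2"]]) auto

lemma weight_mono: "S \<subseteq> T \<Longrightarrow> weight S \<le> weight T"
  unfolding weight_def by (intro suminf_le summable_weight) auto

lemma weight_nonneg: "0 \<le> weight S"
  unfolding weight_def by (intro suminf_nonneg summable_weight) auto

lemma weight_UNIV: "weight UNIV = 1"
  unfolding weight_def using power_half_series sums_unique by fastforce

lemma weight_le_1: "weight S \<le> 1"
  using weight_mono[of S UNIV] weight_UNIV by simp

lemma weight_insert: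
  assumes "n \<notin> S"
  shows "weight (insert n S) = weight S + (1/2) ^ Suc n"
proof -
  have single: "(\<lambda>m. if m = n then (1/2::real) ^ Suc m else 0) sums (1/2) ^ Suc n"
    by (rule sums_single)
  have "weight (insert n S)
      = (\<Sum>m. (if m \<in> S then (1/2) ^ Suc m else 0) + (if m = n then (1/2) ^ Suc m else 0))"
    unfolding weight_def using assms by (intro suminf_cong) auto
  also have "\<dots> = weight S + (\<Sum>m. if m = n then (1/2) ^ Suc m else 0)"
    unfolding weight_def by (intro suminf_add[symmetric] summable_weight sums_summable[OF single])
  also have "\<dots> = weight S + (1/2) ^ Suc n"
    using sums_unique[OF single] by simp
  finally show ?thesis .
qed

locale ultrametric_space = Metric_space M d for M :: "'a set" and d +
  assumes ultrametric: "\<And>x y z. x \<in> M \<Longrightarrow> y \<in> M \<Longrightarrow> z \<in> M \<Longrightarrow> d x z \<le> max (d x y) (d y z)"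

locale enumerated_ultrametric_space = ultrametric_space +
  fixes q :: "nat \<Rightarrow> 'a"
  assumes q_in_M: "\<And>n. q n \<in> M"
    and dense_q: "\<And>x r. x \<in> M \<Longrightarrow> 0 < r \<Longrightarrow> \<exists>n. d (q n) x < r"
begin

definition ball_index :: "'a \<Rightarrow> real \<Rightarrow> nat" where
  "ball_index x r = (LEAST n. d (q n) x < r)"

lemma dist_ball_index: "x \<in> M \<Longrightarrow> 0 < r \<Longrightarrow> d (q (ball_index x r)) x < r"
  unfolding ball_index_def using dense_q by (metis LeastI_ex)

lemma ball_index_eq:
  assumes "x \<in> M" "y \<in> M" "d x y < r"
  shows "ball_index x r = ball_index y r"
proof -
  have "d (q n) x < r \<longleftrightarrow> d (q n) y < r" for n
  proof -
    have "d (q n) y \<le> max (d (q n) x) (d x y)" "d (q n) x \<le> max (d (q n) y) (d y x)"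
      using ultrametric q_in_M assms by blast+
    then show ?thesis using assms(3) commute[of x y] by auto
  qed
  then show ?thesis unfolding ball_index_def by simp
qed

definition precedes :: "'a \<Rightarrow> 'a \<Rightarrow> bool" where
  "precedes x y \<longleftrightarrow> x \<noteq> y \<and> ball_index x (d x y) < ball_index y (d x y)"

lemma precedes_total:
  assumes "x \<in> M" "y \<in> M" "x \<noteq> y"
  shows "precedes x y \<or> precedes y x"
proof -
  define r where "r = d x y"
  have "0 < r" unfolding r_def using assms by simp
  have "ball_index x r \<noteq> ball_index y r"
  proof
    assume eq: "ball_index x r = ball_index y r"
    let ?c = "q (ball_index x r)"
    have "d ?c x < r" "d ?c y < r"
      using dist_ball_index[OF assms(1) \<open>0 < r\<close>] dist_ball_index[OF assms(2) \<open>0 < r\<close>] eq by auto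
    moreover have "d x y \<le> max (d x ?c) (d ?c y)"
      using ultrametric q_in_M assms by blast
    ultimately show False using commute[of x ?c] unfolding r_def by auto
  qed
  then show ?thesis unfolding precedes_def r_def using assms(3) commute[of x y] by auto
qed

lemma precedes_trans:
  assumes M: "x \<in> M" "y \<in> M" "z \<in> M" and xy: "precedes x y" and yz: "precedes y z"
  shows "precedes x z \<and> d x z = max (d x y) (d y z)"
proof -
  define a b where "a = d x y" and "b = d y z"
  have ultra: "d x z \<le> max a b" "b \<le> max a (d x z)" "a \<le> max (d x z) b"
    unfolding a_def b_def using ultrametric M commute by (metis, metis, metis)
  have ia: "ball_index x a < ball_index y a" and ib: "ball_index y b < ball_index z b"
    using xy yz unfolding precedes_def a_def b_def by auto
  have "0 < a" using xy M unfolding precedes_def a_def by simp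
  consider "a < b" | "b < a" | "a = b" by linarith
  then have "d x z = max a b \<and> ball_index x (d x z) < ball_index z (d x z)"
  proof cases
    case 1
    then have "d x z = b" using ultra unfolding max_def by (auto split: if_splits)
    moreover have "ball_index x b = ball_index y b"
      using ball_index_eq[OF M(1,2)] 1 unfolding a_def by simp
    ultimately show ?thesis using ib 1 by simp
  next
    case 2
    then have "d x z = a" using ultra unfolding max_def by (auto split: if_splits)
    moreover have "ball_index z a = ball_index y a"
      using ball_index_eq[OF M(3,2)] 2 commute[of z y] unfolding b_def by simp
    ultimately show ?thesis using ia 2 by simp
  next
    case 3
    have "d x z = a"
    proof (rule ccontr)
      assume "d x z \<noteq> a"
      then have "ball_index x a = ball_index z a"
        using ultra 3 ball_index_eq[OF M(1,3)] by auto
      then show False using ia ib 3 by simp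
    qed
    then show ?thesis using ia ib 3 by simp
  qed
  moreover have "x \<noteq> z" using calculation \<open>0 < a\<close> M by auto
  ultimately show ?thesis unfolding precedes_def a_def b_def by auto
qed

lemma dist_le_of_precedes:
  assumes M: "x \<in> M" "y \<in> M" "z \<in> M"
    and "x = y \<or> precedes x y" "y = z \<or> precedes y z"
  shows "d x y \<le> d x z \<and> d y z \<le> d x z"
  using assms precedes_trans[OF M] by auto

definition index_less :: "nat \<Rightarrow> nat \<Rightarrow> bool" where
  "index_less i j \<longleftrightarrow> precedes (q i) (q j) \<or> (q i = q j \<and> i < j)"

lemma index_less_trans: "index_less i j \<Longrightarrow> index_less j k \<Longrightarrow> index_less i k"
  unfolding index_less_def using precedes_trans[OF q_in_M q_in_M q_in_M] by auto

lemma index_less_irrefl: "\<not> index_less i i"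
  unfolding index_less_def precedes_def by simp

lemma index_less_total:
  assumes "i \<noteq> j"
  shows "index_less i j \<or> index_less j i"
proof (cases "q i = q j")
  case True
  then show ?thesis using assms unfolding index_less_def by (metis linorder_neqE_nat)
next
  case False
  then show ?thesis using precedes_total[OF q_in_M q_in_M] unfolding index_less_def by blast
qed

definition atom :: "nat \<Rightarrow> real set" where
  "atom n = {weight {m. index_less m n} <..< weight {m. index_less m n} + (1/2) ^ Suc n}"

definition atoms :: "real set" where
  "atoms = (\<Union>n. atom n)"

definition label :: "real \<Rightarrow> 'a" where
  "label z = q (SOME n. z \<in> atom n)"

lemma atom_end: "weight {m. index_less m n} + (1/2) ^ Suc n = weight (insert n {m. index_less m n})"
  by (rule weight_insert[symmetric]) (simp add: index_less_irrefl)

lemma atom_before: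
  assumes "index_less m n" "y \<in> atom m" "z \<in> atom n"
  shows "y < z"
proof -
  have "weight (insert m {k. index_less k m}) \<le> weight {k. index_less k n}"
    using assms(1) index_less_trans by (intro weight_mono) auto
  then show ?thesis using assms(2,3) atom_end[of m] unfolding atom_def by auto
qed

lemma atom_subset: "atom n \<subseteq> {0<..<1}"
  using weight_nonneg[of "{m. index_less m n}"] weight_le_1[of "insert n {m. index_less m n}"] atom_end[of n]
  unfolding atom_def by auto

lemma atoms_subset: "atoms \<subseteq> {0<..<1}"
  unfolding atoms_def using atom_subset by blast

lemma atom_nonempty: "atom n \<noteq> {}"
  unfolding atom_def by (simp add: not_le)

lemma open_atom: "open (atom n)"
  unfolding atom_def by simp

lemma atom_unique:
  assumes "z \<in> atom i" "z \<in> atom j"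
  shows "i = j"
proof (rule ccontr)
  assume "i \<noteq> j"
  then have "index_less i j \<or> index_less j i" by (rule index_less_total)
  then show False using atom_before[of i j z z] atom_before[of j i z z] assms by auto
qed

lemma label_atom: "z \<in> atom n \<Longrightarrow> label z = q n"
  unfolding label_def by (rule arg_cong[where f = q], rule some_equality) (auto intro: atom_unique)

lemma label_in_M: "label z \<in> M"
  unfolding label_def using q_in_M by simp

lemma label_precedes:
  assumes "y \<in> atoms" "z \<in> atoms" "y \<le> z"
  shows "label y = label z \<or> precedes (label y) (label z)"
proof -
  obtain i j where ij: "y \<in> atom i" "z \<in> atom j" using assms unfolding atoms_def by auto
  have "i = j \<or> index_less i j"
  proof (rule ccontr)
    assume "\<not> (i = j \<or> index_less i j)"
    then have "index_less j i" using index_less_total by blast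
    then have "z < y" using atom_before ij by blast
    then show False using assms(3) by simp
  qed
  then show ?thesis using label_atom[OF ij(1)] label_atom[OF ij(2)] unfolding index_less_def by auto
qed

lemma dist_label_le:
  assumes "a \<in> atoms" "u \<in> atoms" "v \<in> atoms" "b \<in> atoms" "a \<le> u" "u \<le> v" "v \<le> b"
  shows "d (label u) (label v) \<le> d (label a) (label b)"
proof -
  have "d (label u) (label v) \<le> d (label a) (label v)"
    using dist_le_of_precedes[OF label_in_M label_in_M label_in_M
        label_precedes[OF assms(1,2,5)] label_precedes[OF assms(2,3,6)]] by simp
  also have "\<dots> \<le> d (label a) (label b)"
    using dist_le_of_precedes[OF label_in_M label_in_M label_in_M
        label_precedes[of a v] label_precedes[OF assms(3,4,7)]] assms by simp
  finally show ?thesis .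
qed

lemma emeasure_atoms: "emeasure lborel atoms = 1"
proof -
  have "emeasure lborel atoms = (\<Sum>n. emeasure lborel (atom n))"
    unfolding atoms_def using open_atom atom_unique
    by (intro suminf_emeasure[symmetric]) (auto simp: disjoint_family_on_def)
  also have "\<dots> = (\<Sum>n. ennreal ((1/2) ^ Suc n))"
    unfolding atom_def by simp
  also have "\<dots> = ennreal (\<Sum>n. (1/2) ^ Suc n)"
    by (intro suminf_ennreal2 sums_summable[OF power_half_series]) simp
  also have "\<dots> = 1"
    using sums_unique[OF power_half_series] by simp
  finally show ?thesis .
qed

lemma atoms_dense:
  assumes "0 \<le> \<alpha>" "\<alpha> < \<beta>" "\<beta> \<le> 1"
  shows "\<exists>z\<in>atoms. \<alpha> < z \<and> z < \<beta>"
proof (rule ccontr)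
  assume "\<not> ?thesis"
  then have "atoms \<inter> {\<alpha><..<\<beta>} = {}" by auto
  moreover have "atoms \<in> sets lborel" unfolding atoms_def atom_def by auto
  ultimately have "emeasure lborel atoms + emeasure lborel {\<alpha><..<\<beta>} = emeasure lborel (atoms \<union> {\<alpha><..<\<beta>})"
    by (intro plus_emeasure) auto
  also have "\<dots> \<le> emeasure lborel {0..1::real}"
    using atoms_subset assms by (intro emeasure_mono) auto
  finally have "ennreal (1 + (\<beta> - \<alpha>)) \<le> ennreal 1"
    using assms emeasure_atoms by (simp add: ennreal_plus[symmetric] del: ennreal_plus)
  then show False using assms by (subst (asm) ennreal_le_iff) auto
qed

lemma atoms_dense_right:
  assumes "0 \<le> z" "z < 1" "0 < e"
  shows "\<exists>u\<in>atoms. z < u \<and> u < z + e"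
  using atoms_dense[of z "min (z + e) 1"] assms by auto

lemma atoms_dense_left:
  assumes "0 < z" "z \<le> 1" "0 < e"
  shows "\<exists>u\<in>atoms. z - e < u \<and> u < z"
  using atoms_dense[of "max (z - e) 0" z] assms by auto

lemma closure_atoms: "{0<..<1} \<subseteq> closure atoms"
proof
  fix z :: real assume "z \<in> {0<..<1}"
  then have "\<exists>u\<in>atoms. dist u z < e" if "0 < e" for e
    using atoms_dense_right[of z e] that by (force simp: dist_real_def)
  then show "z \<in> closure atoms" unfolding closure_approachable by blast
qed

lemma label_locally_constant:
  assumes "z \<in> atoms"
  obtains \<delta> where "0 < \<delta>" "\<And>u. dist u z < \<delta> \<Longrightarrow> u \<in> atoms \<and> label u = label z"
proof -
  obtain n where "z \<in> atom n" using assms unfolding atoms_def by blast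
  moreover obtain \<delta> where "0 < \<delta>" "ball z \<delta> \<subseteq> atom n"
    using open_atom open_contains_ball calculation by blast
  ultimately show ?thesis
    using that[of \<delta>] label_atom unfolding atoms_def by (force simp: dist_commute)
qed

section \<open>The partition cut out by the jumps of the labels\<close>

definition jump :: "real \<Rightarrow> real \<Rightarrow> bool" where
  "jump c s \<longleftrightarrow> (\<forall>e>0. \<exists>u\<in>atoms. \<exists>v\<in>atoms. dist u c < e \<and> dist v c < e \<and> s \<le> d (label u) (label v))"

lemma jump_of_separation:
  assumes "x \<in> M" "0 \<le> c" "c < b" "b \<le> 1"
    and below: "\<And>e. 0 < e \<Longrightarrow> \<exists>u\<in>atoms. c - e < u \<and> u \<le> c \<and> d (label u) x < r"
    and above: "\<And>v. v \<in> atoms \<Longrightarrow> c < v \<Longrightarrow> v < b \<Longrightarrow> r \<le> d (label v) x"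
  shows "jump c r"
  unfolding jump_def
proof (intro allI impI)
  fix e :: real assume "0 < e"
  obtain u where u: "u \<in> atoms" "c - e < u" "u \<le> c" "d (label u) x < r"
    using below[OF \<open>0 < e\<close>] by blast
  have "c < min (c + e) b" "min (c + e) b \<le> 1" using assms \<open>0 < e\<close> by auto
  then obtain v where v: "v \<in> atoms" "c < v" "v < min (c + e) b"
    using atoms_dense[OF \<open>0 \<le> c\<close>] by blast
  have "r \<le> d (label v) x" using above v by simp
  moreover have "d (label v) x \<le> max (d (label v) (label u)) (d (label u) x)"
    using ultrametric label_in_M \<open>x \<in> M\<close> by blast
  ultimately have "r \<le> d (label u) (label v)"
    using u(4) commute[of "label v" "label u"] by linarith
  moreover have "dist u c < e" "dist v c < e" using u v by (auto simp: dist_real_def)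
  ultimately show "\<exists>u\<in>atoms. \<exists>v\<in>atoms. dist u c < e \<and> dist v c < e \<and> r \<le> d (label u) (label v)"
    using u(1) v(1) by blast
qed

text \<open>The jump sits at the supremum of the points whose label is \<open>r\<close>-close to that of \<open>a\<close>.\<close>

lemma jump_between:
  assumes a: "a \<in> atoms" and b: "b \<in> atoms" and "a < b" and r: "0 < d (label a) (label b)"
  shows "\<exists>c. a < c \<and> c < b \<and> jump c (d (label a) (label b))"
proof -
  define r where "r = d (label a) (label b)"
  define S where "S = {x \<in> atoms. a \<le> x \<and> x \<le> b \<and> d (label x) (label a) < r}"
  define c where "c = Sup S"
  have "a \<in> S" unfolding S_def r_def using a \<open>a < b\<close> r label_in_M by auto
  have "bdd_above S" unfolding S_def by (auto intro: bdd_aboveI[of _ b])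
  have S_le_c: "x \<le> c" if "x \<in> S" for x
    unfolding c_def using that \<open>bdd_above S\<close> by (rule cSup_upper)
  obtain \<delta>a where "0 < \<delta>a" and \<delta>a: "\<And>u. dist u a < \<delta>a \<Longrightarrow> u \<in> atoms \<and> label u = label a"
    using label_locally_constant[OF a] by blast
  obtain \<delta>b where "0 < \<delta>b" and \<delta>b: "\<And>u. dist u b < \<delta>b \<Longrightarrow> u \<in> atoms \<and> label u = label b"
    using label_locally_constant[OF b] by blast
  have "min (a + \<delta>a/2) b \<in> S"
    using \<delta>a[of "min (a + \<delta>a/2) b"] \<open>0 < \<delta>a\<close> \<open>a < b\<close> r label_in_M b
    unfolding S_def r_def by (auto simp: dist_real_def min_def)
  then have "a < c" using S_le_c \<open>0 < \<delta>a\<close> \<open>a < b\<close> by fastforce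
  have "x \<le> b - \<delta>b" if "x \<in> S" for x
  proof (rule ccontr)
    assume "\<not> x \<le> b - \<delta>b"
    then have "label x = label b" using \<delta>b[of x] that unfolding S_def by (auto simp: dist_real_def)
    then show False using that commute[of "label a" "label b"] unfolding S_def r_def by auto
  qed
  then have "c < b" unfolding c_def using \<open>a \<in> S\<close> \<open>0 < \<delta>b\<close> cSup_least[of S "b - \<delta>b"] by fastforce
  have "jump c r"
  proof (rule jump_of_separation[OF label_in_M])
    show "0 \<le> c" "c < b" "b \<le> 1" using \<open>a < c\<close> \<open>c < b\<close> atoms_subset a b by auto
    show "\<exists>u\<in>atoms. c - e < u \<and> u \<le> c \<and> d (label u) (label a) < r" if "0 < e" for e
    proof -
      obtain u where "u \<in> S" "c - e < u"
        using less_cSup_iff[OF _ \<open>bdd_above S\<close>, of "c - e"] \<open>a \<in> S\<close> \<open>0 < e\<close> unfolding c_def by auto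
      then show ?thesis using S_le_c unfolding S_def by blast
    qed
    show "r \<le> d (label v) (label a)" if "v \<in> atoms" "c < v" "v < b" for v
      using S_le_c[of v] that \<open>a < c\<close> unfolding S_def by fastforce
  qed
  then show ?thesis using \<open>a < c\<close> \<open>c < b\<close> unfolding r_def by blast
qed

abbreviation label_partition :: "real \<Rightarrow> real set" where
  "label_partition \<equiv> jump_partition jump"

lemma interval_disjoint_closure_jump_set:
  assumes a: "a \<in> atoms" and b: "b \<in> atoms" and t: "d (label a) (label b) < t"
  shows "{a<..<b} \<inter> closure (jump_set jump t) = {}"
proof -
  have "{a<..<b} \<inter> jump_set jump t = {}"
  proof (rule ccontr)
    assume "{a<..<b} \<inter> jump_set jump t \<noteq> {}"
    then obtain x s where x: "a < x" "x < b" "t < s" "jump x s" unfolding jump_set_def by auto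
    define e where "e = min (x - a) (b - x)"
    have "0 < e" unfolding e_def using x by auto
    then obtain u v where uv: "u \<in> atoms" "v \<in> atoms" "dist u x < e" "dist v x < e" "s \<le> d (label u) (label v)"
      using x(4) unfolding jump_def by blast
    have "a < u" "u < b" "a < v" "v < b" using uv(3,4) unfolding e_def dist_real_def by auto
    then have "d (label u) (label v) \<le> d (label a) (label b)"
      using dist_label_le[OF a uv(1,2) b] dist_label_le[OF a uv(2,1) b] commute[of "label u" "label v"]
      by (cases "u \<le> v") auto
    then show False using uv(5) x(3) t by simp
  qed
  then show ?thesis using open_Int_closure_eq_empty[of "{a<..<b}"] by simp
qed

lemma atom_disjoint_closure_jump_set:
  assumes "0 < t"
  shows "atom n \<inter> closure (jump_set jump t) = {}"
proof -
  have "atom n \<inter> jump_set jump t = {}"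
  proof (rule ccontr)
    assume "atom n \<inter> jump_set jump t \<noteq> {}"
    then obtain x s where x: "x \<in> atom n" "t < s" "jump x s" unfolding jump_set_def by auto
    obtain e where "0 < e" "ball x e \<subseteq> atom n" using open_atom open_contains_ball x(1) by blast
    then obtain u v where "dist u x < e" "dist v x < e" and uv: "s \<le> d (label u) (label v)"
      using x(3) unfolding jump_def by blast
    then have "u \<in> ball x e" "v \<in> ball x e" by (auto simp: dist_commute)
    then have "u \<in> atom n" "v \<in> atom n" using \<open>ball x e \<subseteq> atom n\<close> by auto
    then have "label u = label v" using label_atom by simp
    then show False using uv x(2) assms label_in_M by simp
  qed
  then show ?thesis using open_Int_closure_eq_empty[OF open_atom] by simp
qed

lemma atoms_subset_zeroset: "atoms \<subseteq> zeroset label_partition"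
proof
  fix z assume "z \<in> atoms"
  then have "0 < z" "z < 1" using atoms_subset by auto
  have "fI label_partition z \<le> ereal 0"
  proof (rule fI_le)
    obtain n where "z \<in> atom n" using \<open>z \<in> atoms\<close> unfolding atoms_def by blast
    show "z \<in> label_partition t" if "0 < t" for t
    proof -
      have "z \<notin> closure (jump_set jump t)"
        using atom_disjoint_closure_jump_set[OF that, of n] \<open>z \<in> atom n\<close> by blast
      then show ?thesis unfolding jump_partition_def using \<open>0 < z\<close> \<open>z < 1\<close> by simp
    qed
  qed simp
  then have "fI label_partition z = 0" using fI_nonneg[of label_partition z] by (simp add: zero_ereal_def)
  then show "z \<in> zeroset label_partition" unfolding zeroset_def using \<open>0 < z\<close> \<open>z < 1\<close> by auto
qed

lemma fI_ge_of_jump: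
  assumes "0 < c" "c < 1" "jump c r"
  shows "ereal r \<le> fI label_partition c"
proof (rule fI_ge)
  fix t assume "0 \<le> t" "t < r"
  then have "c \<in> jump_set jump t" unfolding jump_set_def using assms by auto
  then show "c \<notin> label_partition t" unfolding jump_partition_def using closure_subset by auto
qed

lemma label_cauchy_at_zeroset:
  assumes z: "z \<in> zeroset label_partition" and "0 < t"
  shows "\<exists>\<delta>>0. \<forall>u\<in>atoms. \<forall>v\<in>atoms. dist u z < \<delta> \<longrightarrow> dist v z < \<delta> \<longrightarrow> d (label u) (label v) \<le> t"
proof -
  have "z \<in> label_partition t"
    using mem_of_fI_eq_0[OF mono_jump_partition _ \<open>0 < t\<close>] z unfolding zeroset_def by blast
  then have "z \<notin> closure (jump_set jump t)" unfolding jump_partition_def by auto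
  then obtain \<delta> where "0 < \<delta>" and \<delta>: "\<And>y. y \<in> jump_set jump t \<Longrightarrow> \<not> dist y z < \<delta>"
    unfolding closure_approachable by blast
  have "d (label u) (label v) \<le> t"
    if uv: "u \<in> atoms" "v \<in> atoms" "dist u z < \<delta>" "dist v z < \<delta>" "u < v" for u v
  proof (rule ccontr)
    assume "\<not> d (label u) (label v) \<le> t"
    then obtain c where c: "u < c" "c < v" "jump c (d (label u) (label v))"
      using jump_between[OF uv(1,2,5)] \<open>0 < t\<close> by auto
    have "0 < c" "c < 1" using atoms_subset uv(1,2) c(1,2) by auto
    then have "c \<in> jump_set jump t"
      using c(3) \<open>\<not> d (label u) (label v) \<le> t\<close> unfolding jump_set_def by (auto simp: not_le)
    moreover have "dist c z < \<delta>" using uv c by (auto simp: dist_real_def)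
    ultimately show False using \<delta> by blast
  qed
  moreover have "d (label u) (label v) \<le> t" if "u \<in> atoms" "u = v" for u v
    using that \<open>0 < t\<close> label_in_M by simp
  ultimately have "d (label u) (label v) \<le> t"
    if "u \<in> atoms" "v \<in> atoms" "dist u z < \<delta>" "dist v z < \<delta>" for u v
    using that commute[of "label u" "label v"] by (metis linorder_neqE_linordered_idom)
  then show ?thesis using \<open>0 < \<delta>\<close> by blast
qed

end

locale complete_enumerated_ultrametric_space = enumerated_ultrametric_space +
  assumes complete: "mcomplete"
begin

definition limit_label :: "real \<Rightarrow> 'a" where
  "limit_label z = (SOME y. y \<in> M \<and> (\<forall>e>0. \<exists>\<delta>>0. \<forall>u\<in>atoms. dist u z < \<delta> \<longrightarrow> d (label u) y < e))"

lemma limit_label: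
  assumes "z \<in> zeroset label_partition"
  shows "limit_label z \<in> M"
    and "\<And>e. 0 < e \<Longrightarrow> \<exists>\<delta>>0. \<forall>u\<in>atoms. dist u z < \<delta> \<longrightarrow> d (label u) (limit_label z) < e"
proof -
  have "z \<in> closure atoms"
    using zeroset_jump_partition_subset closure_atoms assms by blast
  then have "\<exists>y\<in>M. \<forall>e>0. \<exists>\<delta>>0. \<forall>u\<in>atoms. dist u z < \<delta> \<longrightarrow> d (label u) y < e"
    using label_in_M label_cauchy_at_zeroset[OF assms]
    by (intro mcomplete_imp_limit_at[OF complete]) auto
  then obtain y where "y \<in> M \<and> (\<forall>e>0. \<exists>\<delta>>0. \<forall>u\<in>atoms. dist u z < \<delta> \<longrightarrow> d (label u) y < e)"
    by blast
  then have "limit_label z \<in> M \<and> (\<forall>e>0. \<exists>\<delta>>0. \<forall>u\<in>atoms. dist u z < \<delta> \<longrightarrow> d (label u) (limit_label z) < e)"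
    unfolding limit_label_def by (rule someI)
  then show "limit_label z \<in> M"
    and "\<And>e. 0 < e \<Longrightarrow> \<exists>\<delta>>0. \<forall>u\<in>atoms. dist u z < \<delta> \<longrightarrow> d (label u) (limit_label z) < e"
    by auto
qed

lemma limit_label_atoms:
  assumes "z \<in> atoms"
  shows "limit_label z = label z"
proof -
  have z: "z \<in> zeroset label_partition" using atoms_subset_zeroset assms by blast
  have "d (label z) (limit_label z) < e" if "0 < e" for e
    using limit_label(2)[OF z that] assms by force
  then have "d (label z) (limit_label z) \<le> 0"
    by (metis less_irrefl not_le)
  then have "d (label z) (limit_label z) = 0"
    using nonneg[of "label z" "limit_label z"] by linarith
  then show ?thesis using label_in_M limit_label(1)[OF z] by simp
qed

lemma atoms_near_limit_labels:
  assumes x: "x \<in> zeroset label_partition" and y: "y \<in> zeroset label_partition"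
    and "x < c" "c < y" "0 < \<eta>"
  obtains u v where "u \<in> atoms" "v \<in> atoms" "x < u" "u < c" "c < v" "v < y"
    "d (label u) (limit_label x) < \<eta>" "d (label v) (limit_label y) < \<eta>"
proof -
  obtain \<delta>x where "0 < \<delta>x" and \<delta>x: "\<forall>u\<in>atoms. dist u x < \<delta>x \<longrightarrow> d (label u) (limit_label x) < \<eta>"
    using limit_label(2)[OF x \<open>0 < \<eta>\<close>] by blast
  obtain \<delta>y where "0 < \<delta>y" and \<delta>y: "\<forall>v\<in>atoms. dist v y < \<delta>y \<longrightarrow> d (label v) (limit_label y) < \<eta>"
    using limit_label(2)[OF y \<open>0 < \<eta>\<close>] by blast
  have "0 < x" "x < 1" "0 < y" "y < 1"
    using subsetD[OF zeroset_jump_partition_subset x] subsetD[OF zeroset_jump_partition_subset y] by auto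
  obtain u where u: "u \<in> atoms" "x < u" "u < x + min \<delta>x (c - x)"
    using atoms_dense_right[of x "min \<delta>x (c - x)"] \<open>0 < x\<close> \<open>x < 1\<close> \<open>0 < \<delta>x\<close> assms by auto
  obtain v where v: "v \<in> atoms" "y - min \<delta>y (y - c) < v" "v < y"
    using atoms_dense_left[of y "min \<delta>y (y - c)"] \<open>0 < y\<close> \<open>y < 1\<close> \<open>0 < \<delta>y\<close> assms by auto
  have "u < c" "c < v" "dist u x < \<delta>x" "dist v y < \<delta>y"
    using u(2,3) v(2,3) min.cobounded1[of \<delta>x "c - x"] min.cobounded1[of \<delta>y "y - c"]
      min.cobounded2[of \<delta>x "c - x"] min.cobounded2[of \<delta>y "y - c"]
    by (simp_all add: dist_real_def)
  then show ?thesis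
    using that[of u v] u v \<delta>x \<delta>y by blast
qed

lemma fI_le_dist_limit_label:
  assumes x: "x \<in> zeroset label_partition" and y: "y \<in> zeroset label_partition" and "x < c" "c < y"
  shows "fI label_partition c \<le> ereal (d (limit_label x) (limit_label y))"
proof (rule fI_le[OF nonneg])
  fix t assume t: "d (limit_label x) (limit_label y) < t"
  define \<eta> where "\<eta> = (t - d (limit_label x) (limit_label y)) / 2"
  have "0 < \<eta>" using t unfolding \<eta>_def by simp
  then obtain u v where uv: "u \<in> atoms" "v \<in> atoms" "x < u" "u < c" "c < v" "v < y"
    and du: "d (label u) (limit_label x) < \<eta>" and dv: "d (label v) (limit_label y) < \<eta>"
    by (rule atoms_near_limit_labels[OF x y \<open>x < c\<close> \<open>c < y\<close>])
  have "d (label u) (label v) \<le> d (label u) (limit_label x) + d (limit_label x) (label v)"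
    using triangle label_in_M limit_label(1)[OF x] by blast
  also have "\<dots> \<le> d (label u) (limit_label x) + (d (limit_label x) (limit_label y) + d (label v) (limit_label y))"
    using triangle label_in_M limit_label(1)[OF x] limit_label(1)[OF y] commute by (metis add_left_mono)
  also have "\<dots> < \<eta> + (d (limit_label x) (limit_label y) + \<eta>)"
    using du dv by (intro add_strict_mono add_strict_left_mono)
  also have "\<dots> = t"
    unfolding \<eta>_def by (simp add: field_simps)
  finally have "{u<..<v} \<inter> closure (jump_set jump t) = {}"
    by (rule interval_disjoint_closure_jump_set[OF uv(1,2)])
  then have "c \<notin> closure (jump_set jump t)"
    using uv by auto
  moreover have "u \<in> {0<..<1}" "v \<in> {0<..<1}"
    using uv(1,2) atoms_subset by blast+
  then have "0 < c" "c < 1"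
    using uv by auto
  ultimately show "c \<in> label_partition t"
    unfolding jump_partition_def by simp
qed

lemma dist_limit_label_le_fI:
  assumes x: "x \<in> zeroset label_partition" and y: "y \<in> zeroset label_partition" and "x < y"
  shows "\<exists>c\<in>{x..y}. ereal (d (limit_label x) (limit_label y)) \<le> fI label_partition c"
proof (cases "d (limit_label x) (limit_label y) = 0")
  case True
  then show ?thesis using fI_nonneg \<open>x < y\<close> by (auto simp: zero_ereal_def)
next
  case False
  define R where "R = d (limit_label x) (limit_label y)"
  have "0 < R" using False nonneg[of "limit_label x" "limit_label y"] unfolding R_def by linarith
  moreover have "x < (x + y) / 2" "(x + y) / 2 < y" using \<open>x < y\<close> by auto
  ultimately obtain u v where uv: "u \<in> atoms" "v \<in> atoms" "x < u" "u < (x + y) / 2"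
      "(x + y) / 2 < v" "v < y"
    and du: "d (label u) (limit_label x) < R" and dv: "d (label v) (limit_label y) < R"
    using atoms_near_limit_labels[OF x y] by blast
  have Rle: "R \<le> d (label u) (label v)"
  proof (rule ccontr)
    assume "\<not> R \<le> d (label u) (label v)"
    moreover have "d (label u) (limit_label y) \<le> max (d (label u) (label v)) (d (label v) (limit_label y))"
      "R \<le> max (d (limit_label x) (label u)) (d (label u) (limit_label y))"
      using ultrametric label_in_M limit_label(1)[OF x] limit_label(1)[OF y] unfolding R_def by blast+
    ultimately show False using du dv commute[of "limit_label x" "label u"] by auto
  qed
  then obtain c where c: "u < c" "c < v" "jump c (d (label u) (label v))"
    using jump_between[OF uv(1,2)] uv(4,5) \<open>0 < R\<close> by auto
  have "u \<in> {0<..<1}" "v \<in> {0<..<1}"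
    using uv(1,2) atoms_subset by blast+
  then have "0 < c" "c < 1" using c by auto
  then have "ereal (d (label u) (label v)) \<le> fI label_partition c"
    using fI_ge_of_jump c(3) by blast
  then have "ereal R \<le> fI label_partition c"
    using Rle by (meson ereal_less_eq(3) order_trans)
  moreover have "c \<in> {x..y}" using c uv by simp
  ultimately show ?thesis unfolding R_def by blast
qed

lemma Sup_fI_eq_dist_limit_label:
  assumes x: "x \<in> zeroset label_partition" and y: "y \<in> zeroset label_partition" and "x < y"
  shows "Sup (fI label_partition ` {x..y}) = ereal (d (limit_label x) (limit_label y))"
proof (rule antisym)
  show "Sup (fI label_partition ` {x..y}) \<le> ereal (d (limit_label x) (limit_label y))"
  proof (rule Sup_least)
    fix f assume "f \<in> fI label_partition ` {x..y}"
    then obtain c where "c \<in> {x..y}" "f = fI label_partition c" by auto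
    moreover have "fI label_partition x = 0" "fI label_partition y = 0"
      using x y unfolding zeroset_def by auto
    ultimately consider "f = 0" | "x < c" "c < y" "f = fI label_partition c"
      by (cases "c = x \<or> c = y") auto
    then show "f \<le> ereal (d (limit_label x) (limit_label y))"
    proof cases
      case 1
      then show ?thesis by (simp add: zero_ereal_def)
    next
      case 2
      then show ?thesis using fI_le_dist_limit_label[OF x y] by simp
    qed
  qed
  obtain c where "c \<in> {x..y}" "ereal (d (limit_label x) (limit_label y)) \<le> fI label_partition c"
    using dist_limit_label_le_fI[OF assms] by blast
  then show "ereal (d (limit_label x) (limit_label y)) \<le> Sup (fI label_partition ` {x..y})"
    by (meson SUP_upper2)
qed

lemma dist_limit_label_eq_dI:
  assumes x: "x \<in> zeroset label_partition" and y: "y \<in> zeroset label_partition"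
  shows "ereal (d (limit_label x) (limit_label y)) = dI label_partition x y"
proof (cases x y rule: linorder_cases)
  case less
  then show ?thesis
    using Sup_fI_eq_dist_limit_label[OF x y] unfolding dI_def by (simp add: min_def max_def)
next
  case equal
  then show ?thesis using limit_label(1)[OF x] unfolding dI_def by (simp add: zero_ereal_def)
next
  case greater
  then show ?thesis
    using Sup_fI_eq_dist_limit_label[OF y x] commute[of "limit_label x" "limit_label y"]
    unfolding dI_def by (simp add: min_def max_def)
qed

lemma closure_of_limit_label_image: "mtopology closure_of (limit_label ` zeroset label_partition) = M"
proof
  show "mtopology closure_of (limit_label ` zeroset label_partition) \<subseteq> M"
    using closure_of_subset_topspace by fastforce
  show "M \<subseteq> mtopology closure_of (limit_label ` zeroset label_partition)"
    unfolding metric_closure_of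
  proof (intro subsetI CollectI conjI allI impI)
    fix x r assume "x \<in> M" "(0::real) < r"
    then obtain n where n: "d (q n) x < r" using dense_q by blast
    obtain z where "z \<in> atom n" using atom_nonempty by blast
    then have "z \<in> atoms" unfolding atoms_def by blast
    then have "z \<in> zeroset label_partition" "limit_label z = q n"
      using atoms_subset_zeroset limit_label_atoms label_atom[OF \<open>z \<in> atom n\<close>] by auto
    moreover have "q n \<in> mball x r" using n q_in_M \<open>x \<in> M\<close> commute[of x "q n"] by simp
    ultimately show "\<exists>y\<in>limit_label ` zeroset label_partition. y \<in> mball x r" by force
  qed simp
qed

theorem completion_of_quotient_label_partition:
  "is_completion_of_quotient M d (zeroset label_partition) (dI label_partition)"
  unfolding is_completion_of_quotient_def
proof (intro conjI exI[of _ limit_label])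
  show "Metric_space M d" by (rule Metric_space_axioms)
  show "mcomplete" by (rule complete)
  show "limit_label ` zeroset label_partition \<subseteq> M" using limit_label(1) by auto
  show "\<forall>x\<in>zeroset label_partition. \<forall>y\<in>zeroset label_partition.
      ereal (d (limit_label x) (limit_label y)) = dI label_partition x y"
    using dist_limit_label_eq_dI by blast
  show "mtopology closure_of (limit_label ` zeroset label_partition) = M"
    by (rule closure_of_limit_label_image)
qed

end

theorem mainTheorem7:
  fixes U :: "'a set" and d :: "'a \<Rightarrow> 'a \<Rightarrow> real"
  assumes "Metric_space U d"
    and "Metric_space.mcomplete U d"
    and "separable_space (Metric_space.mtopology U d)"
    and "\<forall>x\<in>U. \<forall>y\<in>U. \<forall>z\<in>U. d x z \<le> max (d x y) (d y z)"
  shows "\<exists>I. nested_interval_partition I \<and>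
             is_completion_of_quotient U d (zeroset I) (dI I)"
proof (cases "U = {}")
  case True
  have "is_completion_of_quotient U d (zeroset (jump_partition (\<lambda>_ _. True)))
      (dI (jump_partition (\<lambda>_ _. True)))"
    unfolding zeroset_jump_partition_True True
    by (rule is_completion_of_quotient_empty[OF assms(1,2)[unfolded True]])
  then show ?thesis
    by (intro exI[of _ "jump_partition (\<lambda>_ _. True)"] conjI nested_interval_partition_jump_partition)
next
  case False
  interpret Metric_space U d by (rule assms(1))
  obtain q :: "nat \<Rightarrow> 'a" where q: "\<forall>n. q n \<in> U" "\<forall>x\<in>U. \<forall>r>0. \<exists>n. d (q n) x < r"
    using separable_imp_dense_sequence[OF assms(3) False] by blast
  interpret complete_enumerated_ultrametric_space U d q
  proof
    show "d x z \<le> max (d x y) (d y z)" if "x \<in> U" "y \<in> U" "z \<in> U" for x y z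
      using assms(4) that by blast
  qed (use q assms(2) in auto)
  show ?thesis
    by (intro exI[of _ label_partition] conjI nested_interval_partition_jump_partition
        completion_of_quotient_label_partition)
qed

end
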